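(* Consider the linear system $\dot y = A^o_{11} y + A^o_{12} z + B^o_1 u$, $\dot z = A^o_{21} y + A^o_{22} z + B^o_2 u$, with output $y=[I_p\ 0][y;z]$, where $y\in\mathbb{R}^p$ are measured states, $z\in\mathbb{R}^{n^o-p}$ are hidden states and $u\in\mathbb{R}^m$ are inputs. Define $W^o(s)=A^o_{11}+A^o_{12}(sI-A^o_{22})^{-1}A^o_{21}$, $V^o(s)=B^o_1+A^o_{12}(sI-A^o_{22})^{-1}B^o_2$, $R^o=\mathrm{diag}\{W^o\}$ (the diagonal matrix formed from the diagonal entries of $W^o$), and the dynamical structure functions $Q=(sI-R^o)^{-1}(W^o-R^o)$, $P=(sI-R^o)^{-1}V^o$. Then \begin{align*} \mathrm{diag}\{A^o_{11}\}&=\lim_{s\to\infty}R^o(s),\\ A^o_{11}-\mathrm{diag}\{A^o_{11}\}&=\lim_{s\to\infty}sQ(s),\\ B^o_1&=\lim_{s\to\infty}sP(s). \end{align*}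
   Context: The dynamical structure functions $[Q,P]$ satisfy $Y=QY+PU$ in the Laplace domain, with $Q$ having zero diagonal; they encode the direct causal relations between measured states and between inputs and measured states. *)

theory Defs
  imports "HOL-Analysis.Analysis"
begin

text \<open>Real system matrices are embedded into complex matrices
  so that the transfer functions can be evaluated at complex s (Laplace domain).\<close>

definition cmat :: "real^'n^'k \<Rightarrow> complex^'n^'k" where
  "cmat A = (\<chi> i j. complex_of_real (A $ i $ j))"

definition diagm :: "'a::zero^'n^'n \<Rightarrow> 'a^'n^'n" where
  "diagm M = (\<chi> i j. if i = j then M $ i $ j else 0)"

definition Wo :: "real^'p^'p \<Rightarrow> real^'h^'p \<Rightarrow> real^'p^'h \<Rightarrow> real^'h^'h
                   \<Rightarrow> complex \<Rightarrow> complex^'p^'p" where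
  "Wo A11 A12 A21 A22 s =
     cmat A11 + cmat A12 ** matrix_inv (mat s - cmat A22) ** cmat A21"

definition Vo :: "real^'m^'p \<Rightarrow> real^'h^'p \<Rightarrow> real^'h^'h \<Rightarrow> real^'m^'h
                   \<Rightarrow> complex \<Rightarrow> complex^'m^'p" where
  "Vo B1 A12 A22 B2 s =
     cmat B1 + cmat A12 ** matrix_inv (mat s - cmat A22) ** cmat B2"

definition Ro :: "real^'p^'p \<Rightarrow> real^'h^'p \<Rightarrow> real^'p^'h \<Rightarrow> real^'h^'h
                   \<Rightarrow> complex \<Rightarrow> complex^'p^'p" where
  "Ro A11 A12 A21 A22 s = diagm (Wo A11 A12 A21 A22 s)"

definition DSF_Q :: "real^'p^'p \<Rightarrow> real^'h^'p \<Rightarrow> real^'p^'h \<Rightarrow> real^'h^'h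
                   \<Rightarrow> complex \<Rightarrow> complex^'p^'p" where
  "DSF_Q A11 A12 A21 A22 s =
     matrix_inv (mat s - Ro A11 A12 A21 A22 s) **
       (Wo A11 A12 A21 A22 s - Ro A11 A12 A21 A22 s)"

definition DSF_P :: "real^'p^'p \<Rightarrow> real^'h^'p \<Rightarrow> real^'p^'h \<Rightarrow> real^'h^'h
                   \<Rightarrow> real^'m^'p \<Rightarrow> real^'m^'h \<Rightarrow> complex \<Rightarrow> complex^'m^'p" where
  "DSF_P A11 A12 A21 A22 B1 B2 s =
     matrix_inv (mat s - Ro A11 A12 A21 A22 s) ** Vo B1 A12 A22 B2 s"

end

theory Submission
  imports Defs
begin

text \<open>As \<open>s \<rightarrow> \<infinity>\<close> the resolvent \<open>(sI - A)\<^sup>-\<^sup>1\<close> of a matrix that stays bounded behaves like \<open>s\<^sup>-\<^sup>1 I\<close>: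
  from \<open>s X = I + A X\<close> for \<open>X = (sI - A)\<^sup>-\<^sup>1\<close> one gets \<open>|s| \<parallel>X\<parallel> \<le> 2n\<close> and
  \<open>\<parallel>s X - I\<parallel> = \<parallel>A X\<parallel> = O(1/|s|)\<close> once \<open>|s| > 2\<parallel>A\<parallel>\<close>. Hence \<open>W\<^sup>o \<rightarrow> A\<^sup>o\<^sub>1\<^sub>1\<close> and
  \<open>V\<^sup>o \<rightarrow> B\<^sup>o\<^sub>1\<close>, so \<open>R\<^sup>o \<rightarrow> diag{A\<^sup>o\<^sub>1\<^sub>1}\<close>, and since \<open>s (sI - R\<^sup>o(s))\<^sup>-\<^sup>1 \<rightarrow> I\<close> the limits of
  \<open>s Q\<close> and \<open>s P\<close> are \<open>A\<^sup>o\<^sub>1\<^sub>1 - diag{A\<^sup>o\<^sub>1\<^sub>1}\<close> and \<open>B\<^sup>o\<^sub>1\<close>.\<close>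

definition entrywise_norm :: "'a::real_normed_vector^'n^'m \<Rightarrow> real" where
  "entrywise_norm A = (\<Sum>i\<in>UNIV. \<Sum>j\<in>UNIV. norm (A $ i $ j))"

lemma entrywise_norm_nonneg: "0 \<le> entrywise_norm A"
  unfolding entrywise_norm_def by (intro sum_nonneg) auto

lemma norm_entry_le_entrywise_norm: "norm (A $ i $ j) \<le> entrywise_norm A"
proof -
  have "norm (A $ i $ j) \<le> (\<Sum>j\<in>UNIV. norm (A $ i $ j))"
    by (rule member_le_sum) auto
  also have "\<dots> \<le> entrywise_norm A"
    unfolding entrywise_norm_def by (rule member_le_sum) (auto intro: sum_nonneg)
  finally show ?thesis .
qed

lemma entrywise_norm_triangle: "entrywise_norm (A + B) \<le> entrywise_norm A + entrywise_norm B"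
  unfolding entrywise_norm_def
  by (simp add: sum.distrib[symmetric] norm_triangle_ineq sum_mono)

lemma entrywise_norm_mat:
  "entrywise_norm (mat c :: 'a::real_normed_vector^'n^'n) = real CARD('n) * norm c"
proof -
  have "(\<Sum>j\<in>UNIV. norm ((mat c :: 'a^'n^'n) $ i $ j)) = norm c" for i
    by (simp add: mat_def if_distrib[of norm] sum.delta cong: if_cong)
  then show ?thesis unfolding entrywise_norm_def by simp
qed

lemma entrywise_norm_mult_le:
  fixes A :: "'a::real_normed_algebra_1^'k^'m" and B :: "'a^'n^'k"
  shows "entrywise_norm (A ** B) \<le> entrywise_norm A * entrywise_norm B"
proof -
  have "entrywise_norm (A ** B) \<le> (\<Sum>i\<in>UNIV. \<Sum>j\<in>UNIV. \<Sum>k\<in>UNIV. norm (A $ i $ k) * norm (B $ k $ j))"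
    unfolding entrywise_norm_def matrix_matrix_mult_def
    by (intro sum_mono) (simp, rule order_trans[OF norm_sum sum_mono[OF norm_mult_ineq]])
  also have "\<dots> = (\<Sum>i\<in>UNIV. \<Sum>k\<in>UNIV. norm (A $ i $ k) * (\<Sum>j\<in>UNIV. norm (B $ k $ j)))"
    by (intro sum.cong refl) (subst sum.swap, simp add: sum_distrib_left)
  also have "\<dots> \<le> (\<Sum>i\<in>UNIV. \<Sum>k\<in>UNIV. norm (A $ i $ k) * entrywise_norm B)"
    unfolding entrywise_norm_def
    by (intro sum_mono mult_left_mono member_le_sum) (auto intro: sum_nonneg)
  also have "\<dots> = entrywise_norm A * entrywise_norm B"
    by (simp add: entrywise_norm_def sum_distrib_right)
  finally show ?thesis .
qed

lemma sum_norm_matrix_vector_mult_le: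
  fixes A :: "'a::real_normed_algebra_1^'n^'m"
  shows "(\<Sum>i\<in>UNIV. norm ((A *v x) $ i)) \<le> entrywise_norm A * (\<Sum>j\<in>UNIV. norm (x $ j))"
proof -
  have "(\<Sum>i\<in>UNIV. norm ((A *v x) $ i)) \<le> (\<Sum>i\<in>UNIV. \<Sum>j\<in>UNIV. norm (A $ i $ j) * norm (x $ j))"
    unfolding matrix_vector_mult_def
    by (intro sum_mono) (simp, rule order_trans[OF norm_sum sum_mono[OF norm_mult_ineq]])
  also have "\<dots> \<le> (\<Sum>i\<in>UNIV. \<Sum>j\<in>UNIV. norm (A $ i $ j) * (\<Sum>j\<in>UNIV. norm (x $ j)))"
    by (intro sum_mono mult_left_mono member_le_sum) auto
  also have "\<dots> = entrywise_norm A * (\<Sum>j\<in>UNIV. norm (x $ j))"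
    by (simp add: entrywise_norm_def sum_distrib_right)
  finally show ?thesis .
qed

lemma mat_matrix_mult: "mat c ** (A :: 'a::semiring_1^'n^'m) = (\<chi> i j. c * A $ i $ j)"
  by (simp add: vec_eq_iff matrix_matrix_mult_def mat_def if_distrib[of "\<lambda>x. x * _"] cong: if_cong)

lemma mat_matrix_vector_mult: "mat c *v (x :: 'a::semiring_1^'n) = (\<chi> i. c * x $ i)"
  by (simp add: vec_eq_iff matrix_vector_mult_def mat_def if_distrib[of "\<lambda>x. x * _"] cong: if_cong)

lemma entrywise_norm_mat_mult:
  "entrywise_norm (mat c ** (A :: 'a::real_normed_field^'n^'m)) = norm c * entrywise_norm A"
  by (simp add: mat_matrix_mult entrywise_norm_def norm_mult sum_distrib_left)

lemma matrix_diff_rdistrib: "(A - B) ** (C :: 'a::ring_1^'n^'k) = A ** C - B ** C"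
  by (simp add: vec_eq_iff matrix_matrix_mult_def left_diff_distrib sum_subtractf)

lemma invertible_mat_minus:
  fixes M :: "'a::real_normed_field^'n^'n"
  assumes "entrywise_norm M < norm s"
  shows "invertible (mat s - M)"
proof -
  have "x = 0" if "(mat s - M) *v x = 0" for x
  proof -
    define l where "l = (\<Sum>j\<in>UNIV. norm (x $ j))"
    have "M *v x = mat s *v x"
      using that by (simp add: matrix_vector_mult_diff_rdistrib)
    then have "norm s * l = (\<Sum>i\<in>UNIV. norm ((M *v x) $ i))"
      by (simp add: l_def mat_matrix_vector_mult norm_mult sum_distrib_left)
    also have "\<dots> \<le> entrywise_norm M * l"
      unfolding l_def by (rule sum_norm_matrix_vector_mult_le)
    finally have "norm s * l \<le> entrywise_norm M * l" .
    moreover have "0 \<le> l"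
      unfolding l_def by (simp add: sum_nonneg)
    ultimately have "l = 0"
      using mult_strict_right_mono[OF assms, of l] by fastforce
    then show "x = 0"
      by (simp add: l_def sum_nonneg_eq_0_iff vec_eq_iff)
  qed
  then show ?thesis
    unfolding invertible_left_inverse matrix_left_invertible_ker by blast
qed

lemma matrix_inv_right:
  fixes A :: "'a::semiring_1^'n^'m"
  assumes "invertible A"
  shows "A ** matrix_inv A = mat 1"
  using someI_ex[OF assms[unfolded invertible_def]] by (simp add: matrix_inv_def)

lemma scaled_resolvent_eq:
  fixes M :: "'a::real_normed_field^'n^'n"
  assumes "entrywise_norm M < norm s"
  shows "mat s ** matrix_inv (mat s - M) = mat 1 + M ** matrix_inv (mat s - M)"
proof -
  have "(mat s - M) ** matrix_inv (mat s - M) = mat 1"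
    using assms by (intro matrix_inv_right invertible_mat_minus)
  then show ?thesis
    by (simp add: matrix_diff_rdistrib algebra_simps)
qed

lemma norm_mult_entrywise_norm_resolvent_le:
  fixes M :: "'a::real_normed_field^'n^'n"
  assumes "2 * entrywise_norm M < norm s"
  shows "norm s * entrywise_norm (matrix_inv (mat s - M)) \<le> 2 * real CARD('n)"
proof -
  define X where "X = matrix_inv (mat s - M)"
  have "entrywise_norm M < norm s"
    using assms entrywise_norm_nonneg[of M] by linarith
  then have "norm s * entrywise_norm X = entrywise_norm (mat 1 + M ** X)"
    by (simp add: X_def scaled_resolvent_eq flip: entrywise_norm_mat_mult)
  also have "\<dots> \<le> real CARD('n) + entrywise_norm M * entrywise_norm X"
    using entrywise_norm_triangle[of "mat 1" "M ** X"] entrywise_norm_mult_le[of M X]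
    by (simp add: entrywise_norm_mat)
  also have "\<dots> \<le> real CARD('n) + norm s / 2 * entrywise_norm X"
    using assms entrywise_norm_nonneg[of X] by (intro add_left_mono mult_right_mono) auto
  finally show ?thesis
    by (simp add: X_def)
qed

lemma norm_mult_entrywise_norm_scaled_resolvent_diff_le:
  fixes M :: "'a::real_normed_field^'n^'n"
  assumes "2 * entrywise_norm M < norm s"
  shows "norm s * entrywise_norm (mat s ** matrix_inv (mat s - M) - mat 1)
           \<le> 2 * real CARD('n) * entrywise_norm M"
proof -
  define X where "X = matrix_inv (mat s - M)"
  have "entrywise_norm M < norm s"
    using assms entrywise_norm_nonneg[of M] by linarith
  then have "norm s * entrywise_norm (mat s ** X - mat 1) = norm s * entrywise_norm (M ** X)"
    by (simp add: X_def scaled_resolvent_eq)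
  also have "\<dots> \<le> entrywise_norm M * (norm s * entrywise_norm X)"
    using entrywise_norm_mult_le[of M X] by (simp add: mult_left_mono mult.left_commute)
  also have "\<dots> \<le> entrywise_norm M * (2 * real CARD('n))"
    unfolding X_def
    by (intro mult_left_mono norm_mult_entrywise_norm_resolvent_le assms entrywise_norm_nonneg)
  finally show ?thesis
    by (simp add: X_def mult.commute)
qed

lemma tendsto_entrywise_norm:
  "(f \<longlongrightarrow> L) F \<Longrightarrow> ((\<lambda>x. entrywise_norm (f x)) \<longlongrightarrow> entrywise_norm L) F"
  unfolding entrywise_norm_def by (intro tendsto_intros)

lemma tendsto_of_entrywise_norm_diff_0:
  assumes "((\<lambda>x. entrywise_norm (f x - L)) \<longlongrightarrow> 0) F"
  shows "(f \<longlongrightarrow> L) F"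
proof (intro vec_tendstoI)
  fix i j
  have "norm (f x $ i $ j - L $ i $ j) \<le> norm (entrywise_norm (f x - L)) * 1" for x
    using norm_entry_le_entrywise_norm[of "f x - L" i j] by simp
  then have "((\<lambda>x. f x $ i $ j - L $ i $ j) \<longlongrightarrow> 0) F"
    by (intro tendsto_0_le[OF assms] always_eventually allI)
  then show "((\<lambda>x. f x $ i $ j) \<longlongrightarrow> L $ i $ j) F"
    by (rule LIM_zero_cancel)
qed

lemma eventually_bounded_resolvent_regime:
  fixes M :: "'a::real_normed_field \<Rightarrow> 'a^'n^'n"
  assumes "(M \<longlongrightarrow> L) at_infinity"
  shows "eventually (\<lambda>s. entrywise_norm (M s) \<le> entrywise_norm L + 1 \<and>
                         2 * entrywise_norm (M s) < norm s) at_infinity"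
proof -
  have "eventually (\<lambda>s. entrywise_norm (M s) < entrywise_norm L + 1) at_infinity"
    by (rule order_tendstoD(2)[OF tendsto_entrywise_norm[OF assms]]) simp
  moreover have "eventually (\<lambda>s. 2 * (entrywise_norm L + 1) < norm s) at_infinity"
    by (rule eventually_at_infinityI[of "2 * (entrywise_norm L + 1) + 1"]) simp
  ultimately show ?thesis
    by eventually_elim auto
qed

lemma le_norm_inverse_mult:
  fixes s :: "'a::real_normed_div_algebra"
  assumes "s \<noteq> 0" "norm s * x \<le> c"
  shows "x \<le> norm (inverse s) * c"
proof -
  have "0 < norm s"
    using assms(1) by simp
  then have "x \<le> c / norm s"
    using assms(2) by (simp add: pos_le_divide_eq mult.commute)
  then show ?thesis
    by (simp add: norm_inverse divide_inverse mult.commute)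
qed

lemma tendsto_resolvent_0:
  fixes M :: "'a::real_normed_field \<Rightarrow> 'a^'n^'n"
  assumes "(M \<longlongrightarrow> L) at_infinity"
  shows "((\<lambda>s. matrix_inv (mat s - M s)) \<longlongrightarrow> 0) at_infinity"
proof (rule tendsto_of_entrywise_norm_diff_0)
  show "((\<lambda>s. entrywise_norm (matrix_inv (mat s - M s) - 0)) \<longlongrightarrow> 0) at_infinity"
    using eventually_bounded_resolvent_regime[OF assms]
  proof (intro tendsto_0_le[OF tendsto_inverse_0, where K = "2 * real CARD('n)"], eventually_elim)
    case (elim s)
    then have "s \<noteq> 0"
      using entrywise_norm_nonneg[of "M s"] by auto
    with elim show ?case
      using le_norm_inverse_mult[OF _ norm_mult_entrywise_norm_resolvent_le[of "M s" s]]
      by (simp add: entrywise_norm_nonneg)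
  qed
qed

lemma tendsto_scaled_resolvent:
  fixes M :: "'a::real_normed_field \<Rightarrow> 'a^'n^'n"
  assumes "(M \<longlongrightarrow> L) at_infinity"
  shows "((\<lambda>s. mat s ** matrix_inv (mat s - M s)) \<longlongrightarrow> mat 1) at_infinity"
proof (rule tendsto_of_entrywise_norm_diff_0)
  show "((\<lambda>s. entrywise_norm (mat s ** matrix_inv (mat s - M s) - mat 1)) \<longlongrightarrow> 0) at_infinity"
    using eventually_bounded_resolvent_regime[OF assms]
  proof (intro tendsto_0_le[OF tendsto_inverse_0,
        where K = "2 * real CARD('n) * (entrywise_norm L + 1)"], eventually_elim)
    case (elim s)
    then have "s \<noteq> 0"
      using entrywise_norm_nonneg[of "M s"] by auto
    have "norm s * entrywise_norm (mat s ** matrix_inv (mat s - M s) - mat 1)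
            \<le> 2 * real CARD('n) * entrywise_norm (M s)"
      using elim by (intro norm_mult_entrywise_norm_scaled_resolvent_diff_le) simp
    also have "\<dots> \<le> 2 * real CARD('n) * (entrywise_norm L + 1)"
      using elim by (intro mult_left_mono) simp_all
    finally show ?case
      using \<open>s \<noteq> 0\<close> le_norm_inverse_mult by (simp add: entrywise_norm_nonneg)
  qed
qed

lemma tendsto_matrix_mult:
  fixes A :: "_ \<Rightarrow> 'a::real_normed_algebra_1^'k^'m" and B :: "_ \<Rightarrow> 'a^'n^'k"
  assumes "(A \<longlongrightarrow> a) F" "(B \<longlongrightarrow> b) F"
  shows "((\<lambda>x. A x ** B x) \<longlongrightarrow> a ** b) F"
  unfolding matrix_matrix_mult_def
  by (intro vec_tendstoI) (simp, intro tendsto_intros assms)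

lemma tendsto_diagm:
  "(f \<longlongrightarrow> L) F \<Longrightarrow> ((\<lambda>x. diagm (f x)) \<longlongrightarrow> diagm L) F"
  unfolding diagm_def by (intro vec_tendstoI) (simp add: tendsto_vec_nth)

lemma tendsto_transfer_function_at_infinity:
  fixes A :: "'a::real_normed_field^'n^'n"
  shows "((\<lambda>s. D + C ** matrix_inv (mat s - A) ** B) \<longlongrightarrow> D) at_infinity"
proof -
  have "((\<lambda>s. D + C ** matrix_inv (mat s - A) ** B) \<longlongrightarrow> D + C ** 0 ** B) at_infinity"
    by (intro tendsto_intros tendsto_matrix_mult tendsto_resolvent_0[of "\<lambda>_. A" A])
  then show ?thesis
    by simp
qed

lemma cmat_diff: "cmat (A - B) = cmat A - cmat B"
  by (simp add: cmat_def vec_eq_iff)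

lemma cmat_diagm: "cmat (diagm A) = diagm (cmat A)"
  by (simp add: cmat_def diagm_def vec_eq_iff)

theorem proposition1:
  fixes A11 :: "real^'p^'p" and A12 :: "real^'h^'p"
    and A21 :: "real^'p^'h" and A22 :: "real^'h^'h"
    and B1 :: "real^'m^'p" and B2 :: "real^'m^'h"
  shows "((\<lambda>s. Ro A11 A12 A21 A22 s) \<longlongrightarrow> cmat (diagm A11)) at_infinity \<and>
         ((\<lambda>s. mat s ** DSF_Q A11 A12 A21 A22 s) \<longlongrightarrow> cmat (A11 - diagm A11)) at_infinity \<and>
         ((\<lambda>s. mat s ** DSF_P A11 A12 A21 A22 B1 B2 s) \<longlongrightarrow> cmat B1) at_infinity"
proof (intro conjI)
  have W: "(Wo A11 A12 A21 A22 \<longlongrightarrow> cmat A11) at_infinity"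
    unfolding Wo_def by (rule tendsto_transfer_function_at_infinity)
  have V: "(Vo B1 A12 A22 B2 \<longlongrightarrow> cmat B1) at_infinity"
    unfolding Vo_def by (rule tendsto_transfer_function_at_infinity)
  show R: "((\<lambda>s. Ro A11 A12 A21 A22 s) \<longlongrightarrow> cmat (diagm A11)) at_infinity"
    unfolding Ro_def cmat_diagm by (rule tendsto_diagm[OF W])
  have S: "((\<lambda>s. mat s ** matrix_inv (mat s - Ro A11 A12 A21 A22 s)) \<longlongrightarrow> mat 1) at_infinity"
    by (rule tendsto_scaled_resolvent[OF R])
  have "((\<lambda>s. (mat s ** matrix_inv (mat s - Ro A11 A12 A21 A22 s)) **
               (Wo A11 A12 A21 A22 s - Ro A11 A12 A21 A22 s))
         \<longlongrightarrow> mat 1 ** (cmat A11 - cmat (diagm A11))) at_infinity"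
    by (intro tendsto_matrix_mult S tendsto_diff W R)
  then show "((\<lambda>s. mat s ** DSF_Q A11 A12 A21 A22 s) \<longlongrightarrow> cmat (A11 - diagm A11)) at_infinity"
    by (simp add: DSF_Q_def matrix_mul_assoc cmat_diff)
  have "((\<lambda>s. (mat s ** matrix_inv (mat s - Ro A11 A12 A21 A22 s)) ** Vo B1 A12 A22 B2 s)
         \<longlongrightarrow> mat 1 ** cmat B1) at_infinity"
    by (intro tendsto_matrix_mult S V)
  then show "((\<lambda>s. mat s ** DSF_P A11 A12 A21 A22 B1 B2 s) \<longlongrightarrow> cmat B1) at_infinity"
    by (simp add: DSF_P_def matrix_mul_assoc)
qed

end
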